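(* Let $X=\mathrm{tv}(b_0,\dots,b_l)$ be a smooth complete toric surface with $b_0<0$ and $l>2$, with rays $\rho_0,\dots,\rho_l$ as below. Let $\alpha$ be the unique index with $1<\alpha<l$ such that $\rho_\alpha=-\rho_0$ (equivalently, the continued fraction $[b_1,\dots,b_{\alpha-1}]$ is well defined and equals $0$), and put $\gamma=\sum_{i=1}^{\alpha-1}(3-b_i)-3$. Then $\gamma\ge0$, $b_0+b_\alpha-\gamma\ge0$, and for every $R\in(\mathbb Z^2)^*$ with $\langle\rho_\alpha,R\rangle=1$ one has $\langle\rho_{\alpha-1},R\rangle-\langle\rho_1,R\rangle=\gamma$.
   Context: For integers $b_0,\dots,b_l$, $\mathrm{tv}(b_0,\dots,b_l)$ denotes the smooth complete toric surface whose fan in $\mathbb Z^2\otimes\mathbb Q$ has rays with primitive generators $\rho_0,\dots,\rho_l$ in cyclic order (indices mod $l+1$), satisfying $b_i\rho_i=\rho_{i-1}+\rho_{i+1}$; equivalently, $-b_i$ is the self-intersection number of the invariant prime divisor corresponding to $\rho_i$. The continued fraction is defined by $[c_k]=c_k$ and $[c_1,\dots,c_k]=c_1-1/[c_2,\dots,c_k]$ when no division by zero occurs. *)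

theory Defs
  imports Complex_Main
begin

text \<open>Lattice vectors of \<open>\<int>\<^sup>2\<close> and dual vectors in \<open>(\<int>\<^sup>2)\<^sup>*\<close> are both
  represented as pairs of integers; the duality pairing is the dot product.\<close>

type_synonym lvec = "int \<times> int"

definition pairing :: "lvec \<Rightarrow> lvec \<Rightarrow> int" where
  "pairing v R = fst v * fst R + snd v * snd R"

definition det2 :: "lvec \<Rightarrow> lvec \<Rightarrow> int" where
  "det2 u v = fst u * snd v - snd u * fst v"

definition primitive :: "lvec \<Rightarrow> bool" where
  "primitive v \<longleftrightarrow> gcd (fst v) (snd v) = 1"

definition smul :: "int \<Rightarrow> lvec \<Rightarrow> lvec" where
  "smul c v = (c * fst v, c * snd v)"

definition vadd :: "lvec \<Rightarrow> lvec \<Rightarrow> lvec" where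
  "vadd u v = (fst u + fst v, snd u + snd v)"

definition vneg :: "lvec \<Rightarrow> lvec" where
  "vneg v = (- fst v, - snd v)"

text \<open>\<open>\<rho> 0, \<dots>, \<rho> l\<close> are the primitive ray generators of a smooth complete fan in
  \<open>\<int>\<^sup>2 \<otimes> \<rat>\<close>, listed in (counterclockwise) cyclic order, going around the origin
  exactly once: their arguments strictly increase within one full turn, and
  consecutive rays (indices mod l+1) span the two-dimensional smooth cones.\<close>
definition smooth_complete_fan :: "nat \<Rightarrow> (nat \<Rightarrow> lvec) \<Rightarrow> bool" where
  "smooth_complete_fan l \<rho> \<longleftrightarrow>
     (\<forall>i\<le>l. primitive (\<rho> i)) \<and>
     (\<forall>i\<le>l. det2 (\<rho> i) (\<rho> ((i + 1) mod (l + 1))) = 1) \<and>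
     (\<exists>\<theta> :: nat \<Rightarrow> real.
        (\<forall>i<l. \<theta> i < \<theta> (Suc i)) \<and> \<theta> l < \<theta> 0 + 2 * pi \<and>
        (\<forall>i\<le>l. \<exists>r>0. real_of_int (fst (\<rho> i)) = r * cos (\<theta> i) \<and>
                        real_of_int (snd (\<rho> i)) = r * sin (\<theta> i)))"

text \<open>\<open>\<rho>\<close> is the ray data of \<open>tv(b 0, \<dots>, b l)\<close>:
  \<open>b i \<rho> i = \<rho> (i-1) + \<rho> (i+1)\<close>, indices mod l+1.\<close>
definition is_tv_fan :: "nat \<Rightarrow> (nat \<Rightarrow> int) \<Rightarrow> (nat \<Rightarrow> lvec) \<Rightarrow> bool" where
  "is_tv_fan l b \<rho> \<longleftrightarrow> smooth_complete_fan l \<rho> \<and>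
     (\<forall>i\<le>l. smul (b i) (\<rho> i) = vadd (\<rho> ((i + l) mod (l + 1))) (\<rho> ((i + 1) mod (l + 1))))"

end

theory Submission
  imports Defs
begin

(* Measure the rays against \<rho> 0 = - \<rho> \<alpha>.  The rays \<rho> 0, ..., \<rho> \<alpha> form a
   "half-turn chain": consecutive determinants are 1, the intermediate rays lie strictly on the
   positive side of \<rho> 0, and the last ray is - \<rho> 0.  For any such chain v 0, ..., v n, with
   b_k = det (v (k-1)) (v (k+1)), we prove the defect formula
       \<Sum>k=1..n-1. (3 - b_k)  =  3 + det (v 1) (v (n-1))
   by induction on n: a ray of locally maximal height over v 0 has b_k = 1, and deleting it
   (a combinatorial blow-down) changes both sides by the same amount.
   For the fan of tv(b_0, ..., b_l) the b_i are exactly these determinants, hence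
   \<gamma> = det (\<rho> 1) (\<rho> (\<alpha>-1)).  A linear identity shows b_0 + b_\<alpha> - \<gamma> = det (\<rho> (\<alpha>+1)) (\<rho> l),
   and the signs of both determinants are read off from the angular order of the rays.  The
   pairing claim is a further linear identity, using that \<langle>\<rho> 0, R\<rangle> = -1.
   The file develops, in this order: determinant algebra in \<int>\<^sup>2; half-turn chains and the
   defect formula; the polar description of a smooth complete fan; the theorem. *)

section \<open>Determinant algebra in the lattice\<close>

lemma det2_self [simp]: "det2 u u = 0"
  by (simp add: det2_def)

lemma det2_swap: "det2 v u = - det2 u v"
  by (simp add: det2_def)

lemma det2_vadd_left: "det2 (vadd u w) x = det2 u x + det2 w x"
  by (simp add: det2_def vadd_def algebra_simps)

lemma det2_vadd_right: "det2 x (vadd u w) = det2 x u + det2 x w"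
  by (simp add: det2_def vadd_def algebra_simps)

lemma det2_smul_right: "det2 x (smul c u) = c * det2 x u"
  by (simp add: det2_def smul_def algebra_simps)

lemma det2_vneg_left: "det2 (vneg u) x = - det2 u x"
  by (simp add: det2_def vneg_def)

lemma det2_vneg_right: "det2 x (vneg u) = - det2 x u"
  by (simp add: det2_def vneg_def)

text \<open>This is the relation
  \<open>b\<^sub>i \<rho>\<^sub>i = \<rho>\<^sub>i\<^sub>-\<^sub>1 + \<rho>\<^sub>i\<^sub>+\<^sub>1\<close> seen from the determinant side.\<close>
lemma neighbour_sum:
  assumes "det2 u v = 1" "det2 v w = 1"
  shows "vadd u w = smul (det2 u w) v"
proof -
  have "det2 v w * fst u + det2 u v * fst w = det2 u w * fst v"
       "det2 v w * snd u + det2 u v * snd w = det2 u w * snd v"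
    by (simp_all add: det2_def algebra_simps)
  then show ?thesis
    using assms by (simp add: vadd_def smul_def)
qed

lemma smul_coefficient:
  assumes "smul c u = vadd p q" "det2 p u = 1"
  shows "c = det2 p q"
proof -
  have "c = det2 p (smul c u)"
    using assms(2) by (simp add: det2_smul_right)
  also have "\<dots> = det2 p q"
    using assms(1) by (simp add: det2_vadd_right)
  finally show ?thesis .
qed

text \<open>A middle vector with coefficient 1 is the sum of its neighbours; this is the vector
  removed by a blow-down.\<close>
lemma unit_neighbour_sum:
  assumes "det2 u v = 1" "det2 v w = 1" "det2 u w = 1"
  shows "vadd u w = v"
  using neighbour_sum[OF assms(1,2)] assms(3) by (simp add: smul_def)

section \<open>Half-turn chains and the defect formula\<close>

definition half_turn_chain :: "nat \<Rightarrow> (nat \<Rightarrow> lvec) \<Rightarrow> bool" where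
  "half_turn_chain n v \<longleftrightarrow>
     (\<forall>j<n. det2 (v j) (v (Suc j)) = 1) \<and>
     (\<forall>j. 0 < j \<and> j < n \<longrightarrow> 0 < det2 (v 0) (v j)) \<and>
     v n = vneg (v 0)"

definition chain_defect :: "nat \<Rightarrow> (nat \<Rightarrow> lvec) \<Rightarrow> int" where
  "chain_defect n v = (\<Sum>k=1..n-1. 3 - det2 (v (k - 1)) (v (Suc k)))"

definition skip :: "nat \<Rightarrow> nat \<Rightarrow> nat" where
  "skip i k = (if k < i then k else Suc k)"

definition delete_ray :: "nat \<Rightarrow> (nat \<Rightarrow> lvec) \<Rightarrow> nat \<Rightarrow> lvec" where
  "delete_ray i v k = v (skip i k)"

text \<open>A sequence that rises at its start and does not rise at its end has a first peak.
  Applied to the heights \<open>det (v 0) (v j)\<close> this locates a vector that can be blown down.\<close>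
lemma exists_first_peak:
  fixes y :: "nat \<Rightarrow> int"
  assumes "1 < n" "y 0 < y 1" "y n \<le> y (n - 1)"
  obtains i where "0 < i" "i < n" "y (i - 1) < y i" "y (Suc i) \<le> y i"
proof -
  define P where "P j \<longleftrightarrow> 0 < j \<and> y (Suc j) \<le> y j" for j
  have "P (n - 1)"
    using assms by (simp add: P_def)
  define i where "i = (LEAST j. P j)"
  have Pi: "P i"
    unfolding i_def by (rule LeastI) fact
  have "i \<le> n - 1"
    unfolding i_def by (rule Least_le) fact
  moreover have "y (i - 1) < y i"
  proof (cases "i = 1")
    case False
    have "i - 1 < i"
      using Pi by (simp add: P_def)
    then have "\<not> P (i - 1)"
      using not_less_Least[of "i - 1" P] unfolding i_def by blast
    then show ?thesis
      using Pi False by (simp add: P_def)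
  qed (use assms in simp)
  ultimately show ?thesis
    using that[of i] Pi assms(1) by (simp add: P_def)
qed

text \<open>At a peak of heights satisfying \<open>y\<^sub>i\<^sub>-\<^sub>1 + y\<^sub>i\<^sub>+\<^sub>1 = B y\<^sub>i\<close>, the coefficient \<open>B\<close> is 1.\<close>
lemma peak_coefficient:
  fixes p q h B :: int
  assumes "p + q = B * h" "0 \<le> p" "p < h" "0 \<le> q" "q \<le> h" "0 < p + q"
  shows "B = 1"
proof -
  have "0 < B * h" "B * h < 2 * h" "0 < h"
    using assms by linarith+
  then have "0 < B" "B < 2"
    by (simp_all add: zero_less_mult_iff mult_less_cancel_right)
  then show ?thesis
    by simp
qed

text \<open>Every half-turn chain with at least two interior vectors has an interior vector with
  coefficient 1: take the first peak of the heights over \<open>v 0\<close>.\<close>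
lemma half_turn_chain_unit_ray:
  assumes chain: "half_turn_chain n v" and "3 \<le> n"
  obtains i where "1 \<le> i" "i < n" "det2 (v (i - 1)) (v (Suc i)) = 1"
proof -
  define y where "y j = det2 (v 0) (v j)" for j
  have consecutive: "\<And>j. j < n \<Longrightarrow> det2 (v j) (v (Suc j)) = 1"
    and pos: "\<And>j. 0 < j \<Longrightarrow> j < n \<Longrightarrow> 0 < y j" and y_n: "y n = 0"
    using chain by (simp_all add: half_turn_chain_def y_def det2_vneg_right)
  have nonneg: "0 \<le> y j" if "j \<le> n" for j
    using pos[of j] that y_n by (cases "j = 0 \<or> j = n") (auto simp: y_def)
  obtain i where i: "0 < i" "i < n" "y (i - 1) < y i" "y (Suc i) \<le> y i"
    using exists_first_peak[of n y] pos[of 1] pos[of "n - 1"] y_n \<open>3 \<le> n\<close>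
    by (auto simp: y_def)
  define B where "B = det2 (v (i - 1)) (v (Suc i))"
  have "vadd (v (i - 1)) (v (Suc i)) = smul B (v i)"
    unfolding B_def using i consecutive[of "i - 1"] consecutive[of i]
    by (intro neighbour_sum) simp_all
  then have "det2 (v 0) (vadd (v (i - 1)) (v (Suc i))) = det2 (v 0) (smul B (v i))"
    by simp
  then have "y (i - 1) + y (Suc i) = B * y i"
    by (simp add: y_def det2_vadd_right det2_smul_right)
  moreover have "0 < y (i - 1) + y (Suc i)"
  proof (cases "i = 1")
    case True
    then show ?thesis
      using pos[of 2] \<open>3 \<le> n\<close> by (simp add: y_def numeral_2_eq_2)
  next
    case False
    have "0 < y (i - 1)"
      by (rule pos) (use False i in auto)
    then show ?thesis
      using nonneg[of "Suc i"] i by simp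
  qed
  ultimately have "B = 1"
    using i nonneg[of "i - 1"] nonneg[of "Suc i"] by (intro peak_coefficient) auto
  then show ?thesis
    using that[of i] i B_def by simp
qed

lemma delete_ray_half_turn_chain:
  assumes chain: "half_turn_chain n v"
    and i: "1 \<le> i" "i < n" and unit: "det2 (v (i - 1)) (v (Suc i)) = 1"
  shows "half_turn_chain (n - 1) (delete_ray i v)"
proof -
  have "det2 (delete_ray i v j) (delete_ray i v (Suc j)) = 1" if "j < n - 1" for j
    using chain unit that i
    by (cases "Suc j < i"; cases "Suc j = i") (auto simp: half_turn_chain_def delete_ray_def skip_def)
  moreover have "0 < det2 (delete_ray i v 0) (delete_ray i v j)" if "0 < j" "j < n - 1" for j
    using chain that i by (auto simp: half_turn_chain_def delete_ray_def skip_def)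
  moreover have "delete_ray i v (n - 1) = vneg (delete_ray i v 0)"
    using chain i by (auto simp: half_turn_chain_def delete_ray_def skip_def)
  ultimately show ?thesis
    by (simp add: half_turn_chain_def)
qed

lemma delete_ray_defect_term:
  assumes consecutive: "\<forall>j<n. det2 (v j) (v (Suc j)) = 1"
    and i: "1 \<le> i" "i < n" and unit: "det2 (v (i - 1)) (v (Suc i)) = 1"
    and k: "1 \<le> k" "k \<le> n - 2"
  shows "3 - det2 (delete_ray i v (k - 1)) (delete_ray i v (Suc k))
       = 3 - det2 (v (skip i k - 1)) (v (Suc (skip i k))) + of_bool (Suc k = i) + of_bool (k = i)"
proof -
  have blow_down: "vadd (v (i - 1)) (v (Suc i)) = v i"
    using consecutive[rule_format, of "i - 1"] consecutive[rule_format, of i] i unit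
    by (intro unit_neighbour_sum) simp_all
  consider "Suc k < i" | "Suc k = i" | "k = i" | "i < k"
    by linarith
  then show ?thesis
  proof cases
    case 2
    then have "i - 1 = k"
      by simp
    then have "v i = vadd (v k) (v (Suc i))"
      using blow_down by simp
    then have "det2 (v (k - 1)) (v i) = det2 (v (k - 1)) (v k) + det2 (v (k - 1)) (v (Suc i))"
      by (simp add: det2_vadd_right)
    moreover have "det2 (v (k - 1)) (v k) = 1"
      using consecutive[rule_format, of "k - 1"] k i by simp
    ultimately show ?thesis
      using 2 by (simp add: delete_ray_def skip_def less_imp_diff_less)
  next
    case 3
    have "det2 (v i) (v (Suc (Suc i))) = det2 (v (i - 1)) (v (Suc (Suc i))) + det2 (v (Suc i)) (v (Suc (Suc i)))"
      by (subst blow_down[symmetric]) (simp add: det2_vadd_left)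
    moreover have "det2 (v (Suc i)) (v (Suc (Suc i))) = 1"
      using consecutive[rule_format, of "Suc i"] k 3 by simp
    ultimately show ?thesis
      using 3 i by (simp add: delete_ray_def skip_def)
  qed (auto simp: delete_ray_def skip_def)
qed

lemma sum_skip:
  fixes f :: "nat \<Rightarrow> 'a::ab_group_add"
  assumes "1 \<le> i" "i \<le> Suc m"
  shows "(\<Sum>k=1..m. f (skip i k)) = (\<Sum>k=1..Suc m. f k) - f i"
  using assms(2)
proof (induction m)
  case (Suc m)
  show ?case
  proof (cases "i \<le> Suc m")
    case True
    then show ?thesis
      using Suc.IH by (simp add: skip_def)
  next
    case False
    then have "i = Suc (Suc m)"
      using Suc.prems by simp
    moreover have "(\<Sum>k=1..Suc m. f (skip i k)) = (\<Sum>k=1..Suc m. f k)"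
      using False by (intro sum.cong) (auto simp: skip_def)
    ultimately show ?thesis
      by simp
  qed
qed (use assms(1) in auto)

lemma chain_defect_delete_ray:
  assumes consecutive: "\<forall>j<n. det2 (v j) (v (Suc j)) = 1"
    and i: "1 \<le> i" "i < n" and unit: "det2 (v (i - 1)) (v (Suc i)) = 1"
  shows "chain_defect n v = chain_defect (n - 1) (delete_ray i v) + of_bool (i = 1) + of_bool (i = n - 1)"
proof -
  define t where "t k = 3 - det2 (v (k - 1)) (v (Suc k))" for k
  have "chain_defect (n - 1) (delete_ray i v)
      = (\<Sum>k=1..n-2. t (skip i k) + of_bool (Suc k = i) + of_bool (k = i))"
    unfolding chain_defect_def t_def using delete_ray_defect_term[OF assms]
    by (intro sum.cong) (simp_all add: numeral_2_eq_2)
  also have "\<dots> = (\<Sum>k=1..n-2. t (skip i k)) + (\<Sum>k=1..n-2. of_bool (Suc k = i))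
                    + (\<Sum>k=1..n-2. of_bool (k = i))"
    by (simp only: sum.distrib)
  also have "\<dots> = (\<Sum>k=1..Suc (n-2). t k) - t i + of_bool (2 \<le> i) + of_bool (i \<le> n - 2)"
  proof -
    have "(\<Sum>k=1..n-2. of_bool (Suc k = i) :: int) = (\<Sum>k=1..n-2. of_bool (k = i - 1))"
      using i by (intro sum.cong) auto
    also have "\<dots> = of_bool (2 \<le> i)"
      using i by (auto simp: of_bool_def sum.delta)
    finally have left: "(\<Sum>k=1..n-2. of_bool (Suc k = i) :: int) = of_bool (2 \<le> i)" .
    have right: "(\<Sum>k=1..n-2. of_bool (k = i) :: int) = of_bool (i \<le> n - 2)"
      using i by (simp add: of_bool_def sum.delta)
    have "Suc (n - 2) = n - 1"
      using i by simp
    then show ?thesis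
      using i by (simp only: sum_skip left right)
  qed
  also have "\<dots> = chain_defect n v - 2 + of_bool (2 \<le> i) + of_bool (i \<le> n - 2)"
    using i unit by (simp add: chain_defect_def t_def Suc_diff_Suc numeral_2_eq_2)
  finally show ?thesis
    using i by auto
qed

lemma end_det_delete_ray:
  assumes chain: "half_turn_chain n v" and "3 \<le> n"
    and i: "1 \<le> i" "i < n" and unit: "det2 (v (i - 1)) (v (Suc i)) = 1"
  shows "det2 (v 1) (v (n - 1))
       = det2 (delete_ray i v 1) (delete_ray i v (n - 2)) + of_bool (i = 1) + of_bool (i = n - 1)"
proof -
  have consecutive: "\<And>j. j < n \<Longrightarrow> det2 (v j) (v (Suc j)) = 1" and last: "v n = vneg (v 0)"
    using chain by (simp_all add: half_turn_chain_def)
  have blow_down: "vadd (v (i - 1)) (v (Suc i)) = v i"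
    using consecutive[of "i - 1"] consecutive[of i] i unit by (intro unit_neighbour_sum) simp_all
  have n_pred: "Suc (n - 2) = n - 1" "Suc (n - 1) = n"
    using \<open>3 \<le> n\<close> by auto
  consider "i = 1" | "i = n - 1" | "1 < i" "i < n - 1"
    using i by linarith
  then show ?thesis
  proof cases
    case 1
    then have "v 1 = vadd (v 0) (v 2)"
      using blow_down by (simp add: numeral_2_eq_2)
    then have "det2 (v 1) (v (n - 1)) = det2 (v 0) (v (n - 1)) + det2 (v 2) (v (n - 1))"
      by (simp add: det2_vadd_left)
    moreover have "det2 (v 0) (v (n - 1)) = 1"
      using consecutive[of "n - 1"] last n_pred by (simp add: det2_def vneg_def algebra_simps)
    ultimately show ?thesis
      using 1 n_pred \<open>3 \<le> n\<close> by (simp add: delete_ray_def skip_def numeral_2_eq_2)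
  next
    case 2
    then have "i - 1 = n - 2" "Suc i = n"
      using n_pred by auto
    then have "v (n - 1) = vadd (v (n - 2)) (v n)"
      using blow_down 2 by simp
    then have "det2 (v 1) (v (n - 1)) = det2 (v 1) (v (n - 2)) + det2 (v 1) (v n)"
      by (simp add: det2_vadd_right)
    moreover have "det2 (v 1) (v n) = 1"
      using consecutive[of 0] last \<open>3 \<le> n\<close> by (simp add: det2_def vneg_def algebra_simps)
    moreover have "1 < n - 1" "n - 2 < n - 1"
      using \<open>3 \<le> n\<close> by auto
    ultimately show ?thesis
      using 2 by (simp add: delete_ray_def skip_def)
  next
    case 3
    then show ?thesis
      using n_pred by (simp add: delete_ray_def skip_def)
  qed
qed

theorem half_turn_chain_defect:
  assumes "half_turn_chain n v" "2 \<le> n"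
  shows "chain_defect n v = 3 + det2 (v 1) (v (n - 1))"
  using assms
proof (induction n arbitrary: v rule: less_induct)
  case (less n)
  show ?case
  proof (cases "n = 2")
    case True
    then show ?thesis
      using less.prems by (simp add: chain_defect_def half_turn_chain_def det2_vneg_right numeral_2_eq_2)
  next
    case False
    with less.prems have "3 \<le> n"
      by simp
    obtain i where i: "1 \<le> i" "i < n" "det2 (v (i - 1)) (v (Suc i)) = 1"
      using half_turn_chain_unit_ray[OF less.prems(1) \<open>3 \<le> n\<close>] .
    have "chain_defect (n - 1) (delete_ray i v) = 3 + det2 (delete_ray i v 1) (delete_ray i v (n - 2))"
      using less.IH[of "n - 1"] delete_ray_half_turn_chain[OF less.prems(1) i] \<open>3 \<le> n\<close>
      by (simp add: numeral_2_eq_2)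
    moreover have "chain_defect n v
        = chain_defect (n - 1) (delete_ray i v) + of_bool (i = 1) + of_bool (i = n - 1)"
      using less.prems(1) i by (intro chain_defect_delete_ray) (simp_all add: half_turn_chain_def)
    ultimately show ?thesis
      using end_det_delete_ray[OF less.prems(1) \<open>3 \<le> n\<close> i] by simp
  qed
qed

section \<open>Smooth complete fans in polar coordinates\<close>

lemma smooth_complete_fan_consecutive:
  assumes "smooth_complete_fan l \<rho>"
  shows "\<And>j. j < l \<Longrightarrow> det2 (\<rho> j) (\<rho> (Suc j)) = 1" and "det2 (\<rho> l) (\<rho> 0) = 1"
proof -
  have unimodular: "\<forall>i\<le>l. det2 (\<rho> i) (\<rho> ((i + 1) mod (l + 1))) = 1"
    using assms by (simp add: smooth_complete_fan_def)
  show "det2 (\<rho> j) (\<rho> (Suc j)) = 1" if "j < l" for j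
    using unimodular[rule_format, of j] that by simp
  show "det2 (\<rho> l) (\<rho> 0) = 1"
    using unimodular[rule_format, of l] by simp
qed

lemma smooth_complete_fan_angles:
  assumes "smooth_complete_fan l \<rho>"
  obtains \<theta> :: "nat \<Rightarrow> real"
  where "\<And>i j. i < j \<Longrightarrow> j \<le> l \<Longrightarrow> \<theta> i < \<theta> j" and "\<theta> l < \<theta> 0 + 2 * pi"
    and "\<And>i j. i \<le> l \<Longrightarrow> j \<le> l \<Longrightarrow> sgn (real_of_int (det2 (\<rho> i) (\<rho> j))) = sgn (sin (\<theta> j - \<theta> i))"
proof -
  obtain \<theta> :: "nat \<Rightarrow> real" where step: "\<forall>i<l. \<theta> i < \<theta> (Suc i)" and turn: "\<theta> l < \<theta> 0 + 2 * pi"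
    and polar: "\<forall>i\<le>l. \<exists>r>0. real_of_int (fst (\<rho> i)) = r * cos (\<theta> i) \<and>
                              real_of_int (snd (\<rho> i)) = r * sin (\<theta> i)"
    using assms[unfolded smooth_complete_fan_def, THEN conjunct2, THEN conjunct2] by blast
  have mono: "\<theta> i < \<theta> j" if "i < j" "j \<le> l" for i j
    by (rule lift_Suc_mono_less_ivl[of "{..<l}"]) (use step that in auto)
  have sign: "sgn (real_of_int (det2 (\<rho> i) (\<rho> j))) = sgn (sin (\<theta> j - \<theta> i))"
    if i: "i \<le> l" and j: "j \<le> l" for i j
  proof -
    obtain r where "r > 0" "real_of_int (fst (\<rho> i)) = r * cos (\<theta> i)"
        "real_of_int (snd (\<rho> i)) = r * sin (\<theta> i)"
      using polar[rule_format, OF i] by blast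
    moreover obtain s where "s > 0" "real_of_int (fst (\<rho> j)) = s * cos (\<theta> j)"
        "real_of_int (snd (\<rho> j)) = s * sin (\<theta> j)"
      using polar[rule_format, OF j] by blast
    ultimately have "real_of_int (det2 (\<rho> i) (\<rho> j)) = (r * s) * sin (\<theta> j - \<theta> i)"
      by (simp add: det2_def sin_diff algebra_simps)
    with \<open>r > 0\<close> \<open>s > 0\<close> show ?thesis
      by (simp add: sgn_mult)
  qed
  show ?thesis
    by (rule that[OF mono turn sign])
qed

lemma antipodal_ray_geometry:
  assumes fan: "smooth_complete_fan l \<rho>" and \<alpha>: "1 < \<alpha>" "\<alpha> < l" "\<rho> \<alpha> = vneg (\<rho> 0)"
  shows "\<forall>j. 0 < j \<and> j < \<alpha> \<longrightarrow> 0 < det2 (\<rho> 0) (\<rho> j)"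
    and "0 \<le> det2 (\<rho> 1) (\<rho> (\<alpha> - 1))"
    and "0 \<le> det2 (\<rho> (Suc \<alpha>)) (\<rho> l)"
proof -
  obtain \<theta> where mono: "\<And>i j. i < j \<Longrightarrow> j \<le> l \<Longrightarrow> \<theta> i < \<theta> j" and turn: "\<theta> l < \<theta> 0 + 2 * pi"
    and sign: "\<And>i j. i \<le> l \<Longrightarrow> j \<le> l \<Longrightarrow> sgn (real_of_int (det2 (\<rho> i) (\<rho> j))) = sgn (sin (\<theta> j - \<theta> i))"
    using smooth_complete_fan_angles[OF fan] by blast
  have det_pos: "0 < det2 (\<rho> i) (\<rho> j)" if "i \<le> l" "j \<le> l" "\<theta> i < \<theta> j" "\<theta> j < \<theta> i + pi" for i j
    using sign[OF that(1,2)] sin_gt_zero[of "\<theta> j - \<theta> i"] that(3,4) by (simp add: sgn_1_pos)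
  have det_nonneg: "0 \<le> det2 (\<rho> i) (\<rho> j)" if "i \<le> l" "j \<le> l" "\<theta> i \<le> \<theta> j" "\<theta> j \<le> \<theta> i + pi" for i j
  proof -
    have "0 \<le> sin (\<theta> j - \<theta> i)"
      using sin_ge_zero[of "\<theta> j - \<theta> i"] that(3,4) by simp
    then have "0 \<le> sgn (real_of_int (det2 (\<rho> i) (\<rho> j)))"
      unfolding sign[OF that(1,2)] by simp
    then show ?thesis
      by simp
  qed
  have half_turn: "\<theta> \<alpha> = \<theta> 0 + pi"
  proof -
    have "det2 (\<rho> 0) (\<rho> \<alpha>) = 0"
      using \<alpha>(3) by (simp add: det2_vneg_right)
    then have sin_zero: "sin (\<theta> \<alpha> - \<theta> 0 - pi) = 0"
      using sign[of 0 \<alpha>] \<alpha> by (simp add: sgn_0_0)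
    have "\<theta> 0 < \<theta> \<alpha>" "\<theta> \<alpha> < \<theta> l"
      using mono[of 0 \<alpha>] mono[of \<alpha> l] \<alpha> by simp_all
    then have "- pi < \<theta> \<alpha> - \<theta> 0 - pi" "\<theta> \<alpha> - \<theta> 0 - pi < pi"
      using turn by simp_all
    from sin_eq_0_pi[OF this sin_zero] show ?thesis
      by simp
  qed
  show "\<forall>j. 0 < j \<and> j < \<alpha> \<longrightarrow> 0 < det2 (\<rho> 0) (\<rho> j)"
  proof (intro allI impI)
    fix j
    assume j: "0 < j \<and> j < \<alpha>"
    then have "\<theta> 0 < \<theta> j" "\<theta> j < \<theta> \<alpha>"
      using mono[of 0 j] mono[of j \<alpha>] \<alpha> by auto
    then show "0 < det2 (\<rho> 0) (\<rho> j)"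
      using j \<alpha> half_turn by (intro det_pos) auto
  qed
  show "0 \<le> det2 (\<rho> 1) (\<rho> (\<alpha> - 1))"
  proof (rule det_nonneg)
    show "\<theta> 1 \<le> \<theta> (\<alpha> - 1)"
    proof (cases "\<alpha> = 2")
      case False
      then have "1 < \<alpha> - 1" "\<alpha> - 1 \<le> l"
        using \<alpha> by auto
      then show ?thesis
        using mono[of 1 "\<alpha> - 1"] by simp
    qed simp
    show "\<theta> (\<alpha> - 1) \<le> \<theta> 1 + pi"
      using mono[of "\<alpha> - 1" \<alpha>] mono[of 0 1] half_turn \<alpha> by simp
  qed (use \<alpha> in auto)
  show "0 \<le> det2 (\<rho> (Suc \<alpha>)) (\<rho> l)"
  proof (rule det_nonneg)
    show "\<theta> (Suc \<alpha>) \<le> \<theta> l"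
    proof (cases "Suc \<alpha> = l")
      case False
      then show ?thesis
        using mono[of "Suc \<alpha>" l] \<alpha> by simp
    qed simp
    show "\<theta> l \<le> \<theta> (Suc \<alpha>) + pi"
      using mono[of \<alpha> "Suc \<alpha>"] half_turn turn \<alpha> by simp
  qed (use \<alpha> in auto)
qed

section \<open>The fan of tv(b_0, ..., b_l)\<close>

lemma tv_fan_coefficient:
  assumes fan: "is_tv_fan l b \<rho>" and "i \<le> l"
  shows "b i = det2 (\<rho> ((i + l) mod (l + 1))) (\<rho> ((i + 1) mod (l + 1)))"
proof (rule smul_coefficient)
  show "smul (b i) (\<rho> i) = vadd (\<rho> ((i + l) mod (l + 1))) (\<rho> ((i + 1) mod (l + 1)))"
    using fan \<open>i \<le> l\<close> by (simp add: is_tv_fan_def)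
  have "((i + l) mod (l + 1) + 1) mod (l + 1) = (i + l + 1) mod (l + 1)"
    by (rule mod_add_left_eq)
  also have "\<dots> = i"
    using \<open>i \<le> l\<close> by (simp only: add.assoc mod_add_self2) simp
  finally have successor: "((i + l) mod (l + 1) + 1) mod (l + 1) = i" .
  have "\<forall>k\<le>l. det2 (\<rho> k) (\<rho> ((k + 1) mod (l + 1))) = 1"
    using fan by (simp add: is_tv_fan_def smooth_complete_fan_def)
  moreover have "(i + l) mod (l + 1) \<le> l"
    by simp
  ultimately have "det2 (\<rho> ((i + l) mod (l + 1))) (\<rho> (((i + l) mod (l + 1) + 1) mod (l + 1))) = 1"
    by blast
  then show "det2 (\<rho> ((i + l) mod (l + 1))) (\<rho> i) = 1"
    by (simp only: successor)
qed

lemma tv_fan_interior_coefficient: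
  assumes "is_tv_fan l b \<rho>" "1 \<le> i" "i < l"
  shows "b i = det2 (\<rho> (i - 1)) (\<rho> (Suc i))"
proof -
  have "(i + l) mod (l + 1) = i - 1"
    using assms(2,3) by (simp add: le_mod_geq)
  then show ?thesis
    using tv_fan_coefficient[of l b \<rho> i] assms by simp
qed

lemma tv_fan_first_coefficient:
  assumes "is_tv_fan l b \<rho>" "0 < l"
  shows "b 0 = det2 (\<rho> l) (\<rho> 1)"
  using tv_fan_coefficient[of l b \<rho> 0] assms by simp

lemma tv_fan_half_turn_sum:
  assumes fan: "is_tv_fan l b \<rho>" and "1 < \<alpha>" "\<alpha> < l" and chain: "half_turn_chain \<alpha> \<rho>"
  shows "(\<Sum>i=1..\<alpha>-1. 3 - b i) = 3 + det2 (\<rho> 1) (\<rho> (\<alpha> - 1))"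
proof -
  have "b i = det2 (\<rho> (i - 1)) (\<rho> (Suc i))" if "i \<in> {1..\<alpha>-1}" for i
    using that assms(3) by (intro tv_fan_interior_coefficient[OF fan]) auto
  then have "(\<Sum>i=1..\<alpha>-1. 3 - b i) = chain_defect \<alpha> \<rho>"
    unfolding chain_defect_def by simp
  also have "\<dots> = 3 + det2 (\<rho> 1) (\<rho> (\<alpha> - 1))"
    using half_turn_chain_defect[OF chain] assms(2) by simp
  finally show ?thesis .
qed

text \<open>Two linear identities for rays adjacent to \<open>a\<close> and to \<open>- a\<close>: with \<open>a = \<rho> 0\<close>, \<open>c = \<rho> 1\<close>,
  \<open>x = \<rho> l\<close>, \<open>y = \<rho> (\<alpha>+1)\<close>, \<open>z = \<rho> (\<alpha>-1)\<close> the first reads \<open>b\<^sub>0 + b\<^sub>\<alpha> - \<gamma> = det (\<rho> (\<alpha>+1)) (\<rho> l)\<close>.\<close>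
lemma antipodal_coefficient_identity:
  assumes "det2 a c = 1" "det2 x a = 1" "det2 (vneg a) y = 1" "det2 z (vneg a) = 1"
  shows "det2 x c + det2 z y - det2 c z = det2 y x"
proof -
  have "det2 a x = -1" "det2 a y = -1" "det2 a z = 1"
    using assms(2-4) det2_swap[of x a] det2_swap[of z a] by (simp_all add: det2_vneg_left det2_vneg_right)
  with assms(1) show ?thesis
    unfolding det2_def by algebra
qed

lemma antipodal_pairing_identity:
  assumes "det2 a c = 1" "det2 z (vneg a) = 1" "pairing (vneg a) R = 1"
  shows "pairing z R - pairing c R = det2 c z"
proof -
  have "det2 a z = 1"
    using assms(2) det2_swap[of z a] by (simp add: det2_vneg_right)
  moreover have "pairing a R = -1"
    using assms(3) by (simp add: pairing_def vneg_def)
  ultimately show ?thesis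
    using assms(1) unfolding det2_def pairing_def by algebra
qed

theorem lemma3p1:
  fixes l :: nat and b :: "nat \<Rightarrow> int" and \<rho> :: "nat \<Rightarrow> lvec" and \<alpha> :: nat
  assumes fan: "is_tv_fan l b \<rho>"
    and b0: "b 0 < 0"
    and l: "l > 2"
    and alpha: "1 < \<alpha>" "\<alpha> < l" "\<rho> \<alpha> = vneg (\<rho> 0)"
  defines "\<gamma> \<equiv> (\<Sum>i=1..\<alpha>-1. 3 - b i) - 3"
  shows "\<gamma> \<ge> 0 \<and> b 0 + b \<alpha> - \<gamma> \<ge> 0 \<and>
         (\<forall>R :: lvec. pairing (\<rho> \<alpha>) R = 1 \<longrightarrow>
            pairing (\<rho> (\<alpha> - 1)) R - pairing (\<rho> 1) R = \<gamma>)"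
proof -
  have smooth: "smooth_complete_fan l \<rho>"
    using fan by (simp add: is_tv_fan_def)
  note consecutive = smooth_complete_fan_consecutive[OF smooth]
  note geometry = antipodal_ray_geometry[OF smooth alpha]
  have "half_turn_chain \<alpha> \<rho>"
    using consecutive(1) geometry(1) alpha by (simp add: half_turn_chain_def)
  then have \<gamma>: "\<gamma> = det2 (\<rho> 1) (\<rho> (\<alpha> - 1))"
    using tv_fan_half_turn_sum[OF fan alpha(1,2)] by (simp add: \<gamma>_def)
  have c: "det2 (\<rho> 0) (\<rho> 1) = 1" and z: "det2 (\<rho> (\<alpha> - 1)) (vneg (\<rho> 0)) = 1"
    and y: "det2 (vneg (\<rho> 0)) (\<rho> (Suc \<alpha>)) = 1"
    using consecutive(1)[of 0] consecutive(1)[of "\<alpha> - 1"] consecutive(1)[of \<alpha>] alpha by simp_all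
  have "b 0 = det2 (\<rho> l) (\<rho> 1)" "b \<alpha> = det2 (\<rho> (\<alpha> - 1)) (\<rho> (Suc \<alpha>))"
    using tv_fan_first_coefficient[OF fan] tv_fan_interior_coefficient[OF fan, of \<alpha>] alpha by simp_all
  then have "b 0 + b \<alpha> - \<gamma> = det2 (\<rho> (Suc \<alpha>)) (\<rho> l)"
    unfolding \<gamma> by (simp only: antipodal_coefficient_identity[OF c consecutive(2) y z])
  moreover have "pairing (\<rho> (\<alpha> - 1)) R - pairing (\<rho> 1) R = \<gamma>" if "pairing (\<rho> \<alpha>) R = 1" for R
    using antipodal_pairing_identity[OF c z] that alpha(3) \<gamma> by simp
  ultimately show ?thesis
    using \<gamma> geometry(2,3) by simp
qed

end
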